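(* Let $\sigma\in S_6$ and let $B:\Delta_0\to\Delta_0$ be a projective linear automorphism of the line $\Delta_0$ such that $B(\mathfrak p_i)=\mathfrak p_{\sigma(i)}$ for $1\le i\le6$. Then there exists a unique $A\in\mathrm{GL}_0(\mathcal S)$ with $A|_{\Delta_0}=B$.
   Context: Work over an algebraically closed field of characteristic $\neq2$. $F(X)=\sum_{i=0}^6f_iX^i$, $f_6\neq0$, distinct roots $\theta_1,\dots,\theta_6$. $P_j(X)=\prod_{i\ne j}(X-\theta_i)$, $\omega_j=P_j(\theta_j)$. Points of $\mathbb P^5$ are identified with $P(X)=\sum_{j=0}^5p_jX^j$; $\pi_j=P(\theta_j)/\omega_j$. $\mathcal S\subset\mathbb P^5$ is defined by $\sum_j\theta_j^i\omega_j\pi_j^2=0$, $i=0,1,2$. $\Delta_0=\{(p_0:p_1:0:0:0:0)\}\subset\mathcal S$ and $\mathfrak p_i=(-\theta_i:1:0:0:0:0)\in\Delta_0$ (the polynomial $X-\theta_i$). $\mathrm{GL}(\mathcal S)$ is the group of automorphisms of $\mathcal S$ which are restrictions of projective linear transformations of $\mathbb P^5$, and $\mathrm{GL}_0(\mathcal S)=\{A\in\mathrm{GL}(\mathcal S):A(\Delta_0)=\Delta_0\}$. *)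

theory Defs
  imports "HOL-Analysis.Analysis" "HOL-Computational_Algebra.Polynomial"
begin

(* The roots theta_1..theta_6 are modelled as theta :: nat => 'a on the index set {1..6}.
   Points of P^5 are nonzero vectors p :: 'a^6 (coordinates p$0..p$5), up to nonzero scalars. *)

definition alg_closed_field :: "'a::field itself \<Rightarrow> bool" where
  "alg_closed_field _ \<longleftrightarrow> (\<forall>q::'a poly. degree q \<ge> 1 \<longrightarrow> (\<exists>x. poly q x = 0))"

definition proj_eq :: "'a::field ^ 'n \<Rightarrow> 'a ^ 'n \<Rightarrow> bool" where
  "proj_eq v w \<longleftrightarrow> (\<exists>c. c \<noteq> 0 \<and> w = c *s v)"

definition evalP :: "'a::field ^ 6 \<Rightarrow> 'a \<Rightarrow> 'a" where
  "evalP p x = p$0 + p$1 * x + p$2 * x^2 + p$3 * x^3 + p$4 * x^4 + p$5 * x^5"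

(* omega_j = P_j(theta_j) = prod_{i /= j} (theta_j - theta_i) *)
definition omega :: "(nat \<Rightarrow> 'a::field) \<Rightarrow> nat \<Rightarrow> 'a" where
  "omega \<theta> j = (\<Prod>i\<in>{1..6} - {j}. (\<theta> j - \<theta> i))"

definition piP :: "(nat \<Rightarrow> 'a::field) \<Rightarrow> 'a ^ 6 \<Rightarrow> nat \<Rightarrow> 'a" where
  "piP \<theta> p j = evalP p (\<theta> j) / omega \<theta> j"

definition inS :: "(nat \<Rightarrow> 'a::field) \<Rightarrow> 'a ^ 6 \<Rightarrow> bool" where
  "inS \<theta> p \<longleftrightarrow> p \<noteq> 0 \<and>
     (\<forall>i::nat\<in>{0,1,2}. (\<Sum>j\<in>{1..6}. \<theta> j ^ i * omega \<theta> j * (piP \<theta> p j)^2) = 0)"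

(* the line Delta_0 = {(p0:p1:0:0:0:0)}, parametrised by (p0,p1) :: 'a^2 *)
definition emb2 :: "'a::zero ^ 2 \<Rightarrow> 'a ^ 6" where
  "emb2 u = (\<chi> k. if k = 0 then u$0 else if k = 1 then u$1 else 0)"

definition inDelta0 :: "'a::field ^ 6 \<Rightarrow> bool" where
  "inDelta0 p \<longleftrightarrow> p \<noteq> 0 \<and> p$2 = 0 \<and> p$3 = 0 \<and> p$4 = 0 \<and> p$5 = 0"

definition frakp :: "(nat \<Rightarrow> 'a::field) \<Rightarrow> nat \<Rightarrow> 'a ^ 2" where
  "frakp \<theta> i = (\<chi> k. if k = 0 then - \<theta> i else 1)"

(* GL(S): projective linear transformations of P^5 (invertible matrices, up to scalar)
   mapping S onto S *)
definition in_GL_S :: "(nat \<Rightarrow> 'a::field) \<Rightarrow> 'a ^ 6 ^ 6 \<Rightarrow> bool" where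
  "in_GL_S \<theta> M \<longleftrightarrow> invertible M \<and> (\<forall>p. inS \<theta> (M *v p) \<longleftrightarrow> inS \<theta> p)"

definition in_GL0_S :: "(nat \<Rightarrow> 'a::field) \<Rightarrow> 'a ^ 6 ^ 6 \<Rightarrow> bool" where
  "in_GL0_S \<theta> M \<longleftrightarrow> in_GL_S \<theta> M \<and> (\<forall>p. inDelta0 (M *v p) \<longleftrightarrow> inDelta0 p)"

definition restricts_to :: "'a::field ^ 6 ^ 6 \<Rightarrow> 'a ^ 2 ^ 2 \<Rightarrow> bool" where
  "restricts_to M B \<longleftrightarrow> (\<forall>u::'a^2. u \<noteq> 0 \<longrightarrow> proj_eq (M *v emb2 u) (emb2 (B *v u)))"

end

theory Submission imports Defs begin

(* Identify a point p of P^5 with its polynomial P of degree <= 5, i.e. (by Lagrange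
   interpolation) with its six values P(theta_k).  In these "value coordinates" the three
   quadrics cutting out S read  Q_m(p) = sum_k theta_k^m P(theta_k)^2 / omega_k,  m = 0,1,2,
   and the line Delta_0 (plus the origin) is the set of p whose values are affine in theta_k.
   The basic tool is the classical identity  sum_k R(theta_k)/omega_k = 0  for deg R <= 4.

   B acts on theta-coordinates by a Moebius map sending theta_i to theta_(sigma i).
   The linear map  (A p)(theta_(sigma i)) = (det B / den_i) * P(theta_i),  den_i the Moebius
   denominator at theta_i, maps affine value vectors to affine ones (so restricts to B on
   Delta_0) and multiplies the quadrics by a common nonzero constant after an invertible
   change of basis of span(Q_0,Q_1,Q_2); hence A lies in GL_0(S).

   If A' is another such map, D = A^-1 A' preserves S and is a scalar
   c on Delta_0.  Testing D on the sign vectors y_j (values -1 at j, 1 elsewhere) and on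
   combinations of them with Delta_0 that lie on S forces D y_j = c y_j; as the y_j together
   with Delta_0 span everything (char <> 2), D = c, i.e. A' = c A. *)

section \<open>Lagrange interpolation at finitely many distinct nodes\<close>

definition node_prod :: "(nat \<Rightarrow> 'a::field) \<Rightarrow> nat set \<Rightarrow> nat \<Rightarrow> 'a" where
  "node_prod \<theta> K k = (\<Prod>l\<in>K-{k}. \<theta> k - \<theta> l)"

definition lagrange_basis :: "(nat \<Rightarrow> 'a::field) \<Rightarrow> nat set \<Rightarrow> nat \<Rightarrow> 'a poly" where
  "lagrange_basis \<theta> K k = (\<Prod>l\<in>K-{k}. [:- \<theta> l, 1:])"

lemma poly_lagrange_basis: "poly (lagrange_basis \<theta> K k) x = (\<Prod>l\<in>K-{k}. x - \<theta> l)"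
  by (simp add: lagrange_basis_def poly_prod)

lemma node_prod_nonzero:
  assumes "finite K" "inj_on \<theta> K" "k \<in> K"
  shows "node_prod \<theta> K k \<noteq> 0"
  using assms by (auto simp: node_prod_def inj_on_def)

lemma lagrange_basis_at_node:
  assumes "finite K" "j \<in> K" "k \<in> K"
  shows "poly (lagrange_basis \<theta> K k) (\<theta> j) = (if j = k then node_prod \<theta> K k else 0)"
proof (cases "j = k")
  case True
  then show ?thesis by (simp add: poly_lagrange_basis node_prod_def)
next
  case False
  then have "j \<in> K - {k}" using assms by auto
  then show ?thesis using False assms(1) by (auto simp: poly_lagrange_basis intro!: prod_zero)
qed

lemma degree_lagrange_basis:
  assumes "finite K" "k \<in> K"
  shows "degree (lagrange_basis \<theta> K k) = card K - 1"
    and "coeff (lagrange_basis \<theta> K k) (card K - 1) = 1"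
proof -
  have "degree (lagrange_basis \<theta> K k) = (\<Sum>l\<in>K-{k}. degree [:- \<theta> l, 1:])"
    unfolding lagrange_basis_def by (rule degree_prod_eq_sum_degree) auto
  also have "\<dots> = card K - 1" using assms by simp
  finally show deg: "degree (lagrange_basis \<theta> K k) = card K - 1" .
  have "lead_coeff (lagrange_basis \<theta> K k) = 1"
    unfolding lagrange_basis_def lead_coeff_prod by simp
  then show "coeff (lagrange_basis \<theta> K k) (card K - 1) = 1" using deg by simp
qed

definition lagrange_interp :: "(nat \<Rightarrow> 'a::field) \<Rightarrow> nat set \<Rightarrow> (nat \<Rightarrow> 'a) \<Rightarrow> 'a poly" where
  "lagrange_interp \<theta> K v = (\<Sum>k\<in>K. smult (v k / node_prod \<theta> K k) (lagrange_basis \<theta> K k))"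

lemma degree_lagrange_interp:
  assumes "finite K" "K \<noteq> {}"
  shows "degree (lagrange_interp \<theta> K v) < card K"
proof -
  have "degree (lagrange_interp \<theta> K v) \<le> card K - 1"
    unfolding lagrange_interp_def
    by (rule degree_sum_le) (use assms in \<open>auto simp: degree_lagrange_basis\<close>)
  moreover have "card K > 0" using assms by (simp add: card_gt_0_iff)
  ultimately show ?thesis by linarith
qed

lemma poly_lagrange_interp:
  assumes "finite K" "inj_on \<theta> K" "j \<in> K"
  shows "poly (lagrange_interp \<theta> K v) (\<theta> j) = v j"
proof -
  have "poly (lagrange_interp \<theta> K v) (\<theta> j)
          = (\<Sum>k\<in>K. v k / node_prod \<theta> K k * poly (lagrange_basis \<theta> K k) (\<theta> j))"
    by (simp add: lagrange_interp_def poly_sum)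
  also have "\<dots> = (\<Sum>k\<in>K. if k = j then v j else 0)"
    using assms by (intro sum.cong) (auto simp: lagrange_basis_at_node node_prod_nonzero)
  also have "\<dots> = v j" using assms by simp
  finally show ?thesis .
qed

lemma lagrange_interp_self:
  assumes "finite K" "inj_on \<theta> K" "degree R < card K"
  shows "R = lagrange_interp \<theta> K (\<lambda>k. poly R (\<theta> k))"
proof (rule poly_eqI_degree[of "\<theta> ` K"])
  show "poly R x = poly (lagrange_interp \<theta> K (\<lambda>k. poly R (\<theta> k))) x" if "x \<in> \<theta> ` K" for x
    using that assms by (auto simp: poly_lagrange_interp)
  have "K \<noteq> {}" using assms(3) by auto
  then show "degree R < card (\<theta> ` K)" "degree (lagrange_interp \<theta> K (\<lambda>k. poly R (\<theta> k))) < card (\<theta> ` K)"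
    using assms degree_lagrange_interp by (simp_all add: card_image)
qed

lemma lagrange_top_coeff:
  assumes "finite K" "inj_on \<theta> K" "degree R < card K"
  shows "coeff R (card K - 1) = (\<Sum>k\<in>K. poly R (\<theta> k) / node_prod \<theta> K k)"
proof -
  have "coeff R (card K - 1) = coeff (lagrange_interp \<theta> K (\<lambda>k. poly R (\<theta> k))) (card K - 1)"
    using lagrange_interp_self[OF assms] by simp
  also have "\<dots> = (\<Sum>k\<in>K. poly R (\<theta> k) / node_prod \<theta> K k)"
    unfolding lagrange_interp_def coeff_sum
    using assms degree_lagrange_basis(2) by (intro sum.cong) auto
  finally show ?thesis .
qed

lemma lagrange_sum_vanishes:
  assumes "finite K" "inj_on \<theta> K" "degree R < card K - 1"
  shows "(\<Sum>k\<in>K. poly R (\<theta> k) / node_prod \<theta> K k) = 0"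
  using lagrange_top_coeff[OF assms(1,2), of R] assms(3) by (simp add: coeff_eq_0)

lemma lagrange_degree_drop:
  assumes "finite K" "inj_on \<theta> K" "Suc m < card K" "degree G < card K - m"
    and "(\<Sum>k\<in>K. \<theta> k ^ m * poly G (\<theta> k) / node_prod \<theta> K k) = 0"
  shows "degree G < card K - Suc m"
proof -
  define R where "R = monom 1 m * G"
  have poly_R: "poly R x = x ^ m * poly G x" for x
    by (simp add: R_def poly_monom)
  have "degree R < card K"
  proof (cases "G = 0")
    case False
    then show ?thesis using assms(4) by (simp add: R_def degree_mult_eq degree_monom_eq)
  qed (use assms(3) in \<open>simp add: R_def\<close>)
  then have "coeff R (card K - 1) = 0"
    using lagrange_top_coeff[OF assms(1,2)] assms(5) by (simp add: poly_R)
  moreover have "card K - 1 = m + (card K - Suc m)" using assms(3) by simp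
  ultimately have "coeff G (card K - Suc m) = 0"
    by (simp add: R_def coeff_monom_mult)
  moreover have "degree G \<le> card K - Suc m" using assms(4) by simp
  ultimately show ?thesis using assms(3)
    by (metis le_neq_implies_less leading_coeff_0_iff degree_0 zero_less_diff)
qed


section \<open>Points of P^5 as polynomials of degree at most 5\<close>

lemma evalP_add: "evalP (p + q) x = evalP p x + evalP q x"
  by (simp add: evalP_def algebra_simps)

lemma evalP_diff: "evalP (p - q) x = evalP p x - evalP q x"
  by (simp add: evalP_def algebra_simps)

lemma evalP_scale: "evalP (c *s p) x = c * evalP p x"
  by (simp add: evalP_def algebra_simps)

lemma evalP_zero: "evalP 0 x = 0"
  by (simp add: evalP_def)

lemma evalP_sum: "evalP (sum f A) x = (\<Sum>a\<in>A. evalP (f a) x)"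
  by (induction A rule: infinite_finite_induct) (auto simp: evalP_add evalP_zero)

lemma evalP_emb2: "evalP (emb2 u) x = u$0 + u$1 * x"
  by (simp add: emb2_def evalP_def)

lemma exhaust_6:
  fixes x :: 6
  shows "x = 0 \<or> x = 1 \<or> x = 2 \<or> x = 3 \<or> x = 4 \<or> x = 5"
proof (induct x)
  case (of_int z)
  then have "z = 0 \<or> z = 1 \<or> z = 2 \<or> z = 3 \<or> z = 4 \<or> z = 5" by fastforce
  then show ?case by auto
qed

definition poly_of_vec :: "'a::field ^ 6 \<Rightarrow> 'a poly" where
  "poly_of_vec p = [:p$0, p$1, p$2, p$3, p$4, p$5:]"

definition vec_of_poly :: "'a::field poly \<Rightarrow> 'a ^ 6" where
  "vec_of_poly G = (\<chi> i. if i = 0 then coeff G 0 else if i = 1 then coeff G 1 else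
     if i = 2 then coeff G 2 else if i = 3 then coeff G 3 else if i = 4 then coeff G 4 else coeff G 5)"

lemma poly_poly_of_vec: "poly (poly_of_vec p) x = evalP p x"
  by (simp add: poly_of_vec_def evalP_def algebra_simps power2_eq_square power3_eq_cube
      power_numeral_reduce)

lemma degree_poly_of_vec: "degree (poly_of_vec p) \<le> 5"
  unfolding poly_of_vec_def by (simp add: degree_pCons_le le_SucI eval_nat_numeral)

lemma poly_of_vec_inj:
  assumes "poly_of_vec p = poly_of_vec q"
  shows "p = q"
proof -
  have "p$i = q$i" for i
    using assms exhaust_6[of i] by (auto simp: poly_of_vec_def)
  then show ?thesis by (simp add: vec_eq_iff)
qed

lemma poly_bounded_degree:
  fixes G :: "'a::comm_semiring_1 poly"
  assumes "degree G \<le> n"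
  shows "poly G x = (\<Sum>i\<le>n. coeff G i * x ^ i)"
  unfolding poly_altdef using assms by (intro sum.mono_neutral_left) (auto simp: coeff_eq_0)

lemma evalP_vec_of_poly:
  fixes G :: "'a::field poly"
  assumes "degree G \<le> 5"
  shows "evalP (vec_of_poly G) x = poly G x"
proof -
  have "poly G x = (\<Sum>i\<le>5. coeff G i * x ^ i)"
    using poly_bounded_degree[OF assms] .
  then show ?thesis
    by (simp add: vec_of_poly_def evalP_def eval_nat_numeral atMost_Suc algebra_simps)
qed

section \<open>Value coordinates at six distinct nodes\<close>

locale six_nodes =
  fixes \<theta> :: "nat \<Rightarrow> 'a::field"
  assumes distinct_nodes: "inj_on \<theta> {1..6}"
begin

abbreviation ev :: "'a^6 \<Rightarrow> nat \<Rightarrow> 'a" where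
  "ev p k \<equiv> evalP p (\<theta> k)"

lemma nodes_ne: "a \<in> {1..6} \<Longrightarrow> b \<in> {1..6} \<Longrightarrow> a \<noteq> b \<Longrightarrow> \<theta> a \<noteq> \<theta> b"
  using distinct_nodes by (auto simp: inj_on_def)

lemma omega_node_prod: "omega \<theta> = node_prod \<theta> {1..6}"
  by (simp add: fun_eq_iff omega_def node_prod_def)

lemma omega_nonzero: "k \<in> {1..6} \<Longrightarrow> omega \<theta> k \<noteq> 0"
  unfolding omega_node_prod by (rule node_prod_nonzero) (use distinct_nodes in auto)

lemma ev_inj:
  assumes "\<forall>k\<in>{1..6}. ev p k = ev q k"
  shows "p = q"
proof (rule poly_of_vec_inj, rule poly_eqI_degree[of "\<theta> ` {1..6}"])
  show "poly (poly_of_vec p) x = poly (poly_of_vec q) x" if "x \<in> \<theta> ` {1..6}" for x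
    using that assms by (auto simp: poly_poly_of_vec)
  have "card (\<theta> ` {1..6}) = 6" using distinct_nodes by (simp add: card_image)
  then show "degree (poly_of_vec p) < card (\<theta> ` {1..6})"
    "degree (poly_of_vec q) < card (\<theta> ` {1..6})"
    using degree_poly_of_vec[of p] degree_poly_of_vec[of q] by auto
qed

definition vec_with_values :: "(nat \<Rightarrow> 'a) \<Rightarrow> 'a^6" where
  "vec_with_values v = vec_of_poly (lagrange_interp \<theta> {1..6} v)"

lemma ev_vec_with_values:
  assumes "k \<in> {1..6}"
  shows "ev (vec_with_values v) k = v k"
proof -
  have "degree (lagrange_interp \<theta> {1..6} v) < 6"
    using degree_lagrange_interp[of "{1..6::nat}" \<theta> v] by simp
  then show ?thesis
    using distinct_nodes assms
    by (simp add: vec_with_values_def evalP_vec_of_poly poly_lagrange_interp)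
qed

definition quadric :: "'a^6 \<Rightarrow> nat \<Rightarrow> 'a" where
  "quadric p m = (\<Sum>k\<in>{1..6}. \<theta> k ^ m * ev p k ^ 2 / omega \<theta> k)"

lemma inS_iff_quadric:
  "inS \<theta> p \<longleftrightarrow> p \<noteq> 0 \<and> quadric p 0 = 0 \<and> quadric p 1 = 0 \<and> quadric p 2 = 0"
proof -
  have "\<theta> k ^ m * omega \<theta> k * (piP \<theta> p k)^2 = \<theta> k ^ m * ev p k ^ 2 / omega \<theta> k"
    if "k \<in> {1..6}" for k m
    using omega_nonzero[OF that] by (simp add: piP_def power2_eq_square field_simps)
  then have "(\<Sum>k\<in>{1..6}. \<theta> k ^ m * omega \<theta> k * (piP \<theta> p k)^2) = quadric p m" for m
    unfolding quadric_def by (intro sum.cong) auto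
  then show ?thesis unfolding inS_def by simp
qed

lemma inS_quadric: "inS \<theta> p \<Longrightarrow> m \<le> 2 \<Longrightarrow> quadric p m = 0"
  unfolding inS_iff_quadric by (auto simp: le_Suc_eq numeral_2_eq_2)

lemma omega_sum_vanishes: "degree R \<le> 4 \<Longrightarrow> (\<Sum>k\<in>{1..6}. poly R (\<theta> k) / omega \<theta> k) = 0"
  unfolding omega_node_prod by (rule lagrange_sum_vanishes) (use distinct_nodes in auto)

lemma omega_sum_powers: "m \<le> 4 \<Longrightarrow> (\<Sum>k\<in>{1..6}. \<theta> k ^ m / omega \<theta> k) = 0"
  using omega_sum_vanishes[of "[:0,1:] ^ m"]
  by (simp add: degree_power_le order.trans[OF degree_power_le])

lemma omega_sum_affine_sq:
  assumes "m \<le> 2"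
  shows "(\<Sum>k\<in>{1..6}. \<theta> k ^ m * (\<alpha> + \<beta> * \<theta> k)^2 / omega \<theta> k) = 0"
proof -
  let ?R = "[:0,1:] ^ m * [:\<alpha>,\<beta>:] ^ 2"
  have "degree ([:0,1:] ^ m :: 'a poly) \<le> m"
    using degree_power_le[of "[:0,1:]::'a poly" m] by simp
  moreover have "degree ([:\<alpha>,\<beta>:] ^ 2) \<le> 2"
    using degree_power_le[of "[:\<alpha>,\<beta>:]" 2] by (simp split: if_splits)
  ultimately have "degree ?R \<le> 4"
    using assms by (intro order.trans[OF degree_mult_le]) auto
  from omega_sum_vanishes[OF this] show ?thesis by (simp add: algebra_simps)
qed


definition cross :: "'a^6 \<Rightarrow> 'a^6 \<Rightarrow> nat \<Rightarrow> 'a" where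
  "cross p q m = (\<Sum>k\<in>{1..6}. \<theta> k ^ m * ev p k * ev q k / omega \<theta> k)"

lemma quadric_add: "quadric (p + q) m = quadric p m + 2 * cross p q m + quadric q m"
proof -
  have "quadric (p + q) m = (\<Sum>k\<in>{1..6}. \<theta> k ^ m * ev p k ^ 2 / omega \<theta> k
          + 2 * (\<theta> k ^ m * ev p k * ev q k / omega \<theta> k) + \<theta> k ^ m * ev q k ^ 2 / omega \<theta> k)"
    unfolding quadric_def
    by (intro sum.cong) (auto simp: evalP_add power2_eq_square algebra_simps add_divide_distrib)
  then show ?thesis by (simp add: quadric_def cross_def sum.distrib sum_distrib_left)
qed

lemma cross_scale: "cross (a *s p) q m = a * cross p q m"
  unfolding cross_def sum_distrib_left by (intro sum.cong) (auto simp: evalP_scale)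

lemma quadric_scale: "quadric (a *s p) m = a ^ 2 * quadric p m"
  unfolding quadric_def sum_distrib_left
  by (intro sum.cong) (auto simp: evalP_scale power_mult_distrib)

lemma two_node_moments:
  assumes i: "i \<in> {1..6}" and j: "j \<in> {1..6}" and ij: "i \<noteq> j"
    and support: "\<forall>k\<in>{1..6}. k \<noteq> i \<longrightarrow> k \<noteq> j \<longrightarrow> f k = 0"
    and moments: "\<forall>m\<le>1. (\<Sum>k\<in>{1..6}. \<theta> k ^ m * f k) = 0"
  shows "f i = 0"
proof -
  have two_terms: "(\<Sum>k\<in>{1..6}. \<theta> k ^ m * f k) = \<theta> i ^ m * f i + \<theta> j ^ m * f j" for m
  proof -
    have "(\<Sum>k\<in>{1..6}. \<theta> k ^ m * f k) = (\<Sum>k\<in>{i,j}. \<theta> k ^ m * f k)"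
      by (rule sum.mono_neutral_right) (use i j support in auto)
    then show ?thesis using ij by simp
  qed
  have "f i + f j = 0" "\<theta> i * f i + \<theta> j * f j = 0"
    using moments two_terms[of 0] two_terms[of 1] by auto
  then have "(\<theta> i - \<theta> j) * f i = 0"
    by (simp add: algebra_simps eq_neg_iff_add_eq_0[symmetric])
  then show ?thesis using nodes_ne[OF i j ij] by simp
qed

section \<open>The line Delta_0 and the sign vectors\<close>

definition in_span_Delta0 :: "'a^6 \<Rightarrow> bool" where
  "in_span_Delta0 p \<longleftrightarrow> (\<exists>\<alpha> \<beta>. \<forall>k\<in>{1..6}. ev p k = \<alpha> + \<beta> * \<theta> k)"

lemma in_span_Delta0_iff_emb2: "in_span_Delta0 p \<longleftrightarrow> (\<exists>u. p = emb2 u)"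
proof
  assume "in_span_Delta0 p"
  then obtain \<alpha> \<beta> where ab: "\<forall>k\<in>{1..6}. ev p k = \<alpha> + \<beta> * \<theta> k"
    unfolding in_span_Delta0_def by blast
  have "p = emb2 (\<chi> i. if i = 0 then \<alpha> else \<beta>)"
    by (rule ev_inj) (simp add: ab evalP_emb2)
  then show "\<exists>u. p = emb2 u" ..
next
  assume "\<exists>u. p = emb2 u"
  then obtain u where "p = emb2 u" ..
  then have "\<forall>k\<in>{1..6}. ev p k = u$0 + u$1 * \<theta> k" by (simp add: evalP_emb2)
  then show "in_span_Delta0 p" unfolding in_span_Delta0_def by blast
qed

lemma in_span_Delta0_iff: "in_span_Delta0 p \<longleftrightarrow> p$2 = 0 \<and> p$3 = 0 \<and> p$4 = 0 \<and> p$5 = 0"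
proof
  assume "in_span_Delta0 p"
  then show "p$2 = 0 \<and> p$3 = 0 \<and> p$4 = 0 \<and> p$5 = 0"
    unfolding in_span_Delta0_iff_emb2 by (auto simp: emb2_def)
next
  assume "p$2 = 0 \<and> p$3 = 0 \<and> p$4 = 0 \<and> p$5 = 0"
  then have "\<forall>k\<in>{1..6}. ev p k = p$0 + p$1 * \<theta> k" by (simp add: evalP_def)
  then show "in_span_Delta0 p" unfolding in_span_Delta0_def by blast
qed

lemma inDelta0_iff_span: "inDelta0 p \<longleftrightarrow> p \<noteq> 0 \<and> in_span_Delta0 p"
  by (simp add: inDelta0_def in_span_Delta0_iff)

lemma quadric_in_span:
  assumes "in_span_Delta0 p" "m \<le> 2"
  shows "quadric p m = 0"
proof -
  obtain \<alpha> \<beta> where "\<forall>k\<in>{1..6}. ev p k = \<alpha> + \<beta> * \<theta> k"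
    using assms(1) unfolding in_span_Delta0_def by blast
  then have "quadric p m = (\<Sum>k\<in>{1..6}. \<theta> k ^ m * (\<alpha> + \<beta> * \<theta> k) ^ 2 / omega \<theta> k)"
    unfolding quadric_def by (intro sum.cong) auto
  then show ?thesis using omega_sum_affine_sq[OF assms(2)] by simp
qed

lemma cross_vanishes_on_S:
  assumes two: "(2::'a) \<noteq> 0" and a: "a \<noteq> 0" and x: "in_span_Delta0 x"
    and z: "inS \<theta> z" and axz: "inS \<theta> (a *s x + z)" and m: "m \<le> 2"
  shows "cross x z m = 0"
proof -
  have "0 = quadric (a *s x + z) m" using inS_quadric[OF axz m] by simp
  also have "\<dots> = 2 * a * cross x z m"
    using quadric_in_span[OF x m] inS_quadric[OF z m]
    by (simp add: quadric_add quadric_scale cross_scale)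
  finally show ?thesis using two a by simp
qed

lemma affine_two_nodes:
  assumes "a \<in> {1..6}" "b \<in> {1..6}" "a \<noteq> b"
    and "\<alpha> + \<beta> * \<theta> a = \<gamma>" "\<alpha> + \<beta> * \<theta> b = \<gamma>"
  shows "\<beta> = 0" "\<alpha> = \<gamma>"
proof -
  have "\<beta> * \<theta> a = \<beta> * \<theta> b" using assms(4,5) by (metis add_left_cancel)
  then have "\<beta> * (\<theta> a - \<theta> b) = 0" by (simp add: right_diff_distrib)
  moreover have "\<theta> a - \<theta> b \<noteq> 0" using nodes_ne[OF assms(1-3)] by simp
  ultimately show "\<beta> = 0" by simp
  then show "\<alpha> = \<gamma>" using assms by simp
qed

lemma two_other_nodes:
  fixes j :: nat
  obtains a b where "a \<in> {1..6}" "b \<in> {1..6}" "a \<noteq> b" "a \<noteq> j" "b \<noteq> j"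
proof -
  consider "j = 1" | "j = 2" | "j \<noteq> 1 \<and> j \<noteq> 2" by blast
  then show ?thesis
    by cases (use that[of 2 3] that[of 1 3] that[of 1 2] in auto)
qed

definition sign_val :: "nat \<Rightarrow> nat \<Rightarrow> 'a" where
  "sign_val j k = (if k = j then -1 else 1)"

definition sign_vec :: "nat \<Rightarrow> 'a^6" where
  "sign_vec j = vec_with_values (sign_val j)"

definition one_vec :: "'a^6" where
  "one_vec = vec_with_values (\<lambda>k. 1)"

lemma ev_sign_vec: "k \<in> {1..6} \<Longrightarrow> ev (sign_vec j) k = sign_val j k"
  by (simp add: sign_vec_def ev_vec_with_values)

lemma ev_one_vec: "k \<in> {1..6} \<Longrightarrow> ev one_vec k = 1"
  by (simp add: one_vec_def ev_vec_with_values)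

lemma sign_sq: "sign_val j k ^ 2 = 1"
  by (simp add: sign_val_def)

lemma one_vec_in_span: "in_span_Delta0 one_vec"
  unfolding in_span_Delta0_def using ev_one_vec by (intro exI[of _ 1] exI[of _ 0]) auto

lemma sign_not_affine:
  assumes two: "(2::'a) \<noteq> 0" and j: "j \<in> {1..6}"
  shows "\<not> (\<forall>k\<in>{1..6}. sign_val j k = \<alpha> + \<beta> * \<theta> k)"
proof
  assume h: "\<forall>k\<in>{1..6}. sign_val j k = \<alpha> + \<beta> * \<theta> k"
  obtain a b where ab: "a \<in> {1..6}" "b \<in> {1..6}" "a \<noteq> b" "a \<noteq> j" "b \<noteq> j"
    by (rule two_other_nodes)
  have "\<alpha> + \<beta> * \<theta> a = 1" "\<alpha> + \<beta> * \<theta> b = 1"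
    using h[rule_format, of a] h[rule_format, of b] ab by (auto simp: sign_val_def)
  from affine_two_nodes[OF ab(1-3) this] have "\<beta> = 0" "\<alpha> = 1" by auto
  then have "-1 = (1::'a)" using h[rule_format, OF j] by (simp add: sign_val_def)
  then have "(2::'a) = 0" by (metis add_eq_0_iff one_add_one)
  with two show False by simp
qed

lemma inS_unit_squares:
  assumes "\<forall>k\<in>{1..6}. ev p k ^ 2 = 1"
  shows "inS \<theta> p"
proof -
  have "p \<noteq> 0" using assms[rule_format, of 1] by (auto simp: evalP_zero)
  moreover have "quadric p m = 0" if "m \<le> 2" for m
  proof -
    have "quadric p m = (\<Sum>k\<in>{1..6}. \<theta> k ^ m / omega \<theta> k)"
      unfolding quadric_def using assms by (intro sum.cong) auto
    also have "\<dots> = 0" using omega_sum_powers that by simp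
    finally show ?thesis .
  qed
  ultimately show ?thesis unfolding inS_iff_quadric by simp
qed

lemma inS_signed_affine:
  assumes "\<forall>k\<in>{1..6}. ev p k = sign_val j k * (\<alpha> + \<beta> * \<theta> k)" "p \<noteq> 0"
  shows "inS \<theta> p"
proof -
  have "quadric p m = 0" if "m \<le> 2" for m
  proof -
    have "quadric p m = (\<Sum>k\<in>{1..6}. \<theta> k ^ m * (\<alpha> + \<beta> * \<theta> k) ^ 2 / omega \<theta> k)"
      unfolding quadric_def using assms
      by (intro sum.cong) (auto simp: power_mult_distrib sign_sq)
    also have "\<dots> = 0" using omega_sum_affine_sq that by simp
    finally show ?thesis .
  qed
  then show ?thesis unfolding inS_iff_quadric using assms by simp
qed

section \<open>Value vectors with vanishing cross moments\<close>

lemma affine_off_node: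
  assumes j: "j \<in> {1..6}"
    and cross: "\<forall>m\<le>2. (\<Sum>k\<in>{1..6}. \<theta> k ^ m * (\<theta> k - \<theta> j) * z k / omega \<theta> k) = 0"
  shows "\<exists>\<alpha> \<beta>. \<forall>k\<in>{1..6}-{j}. z k = \<alpha> + \<beta> * \<theta> k"
proof -
  define K where "K = {1..6::nat} - {j}"
  have fin: "finite K" and inj: "inj_on \<theta> K" and card: "card K = 5"
    using distinct_nodes j by (auto simp: K_def intro: inj_on_subset)
  have omega_split: "omega \<theta> k = (\<theta> k - \<theta> j) * node_prod \<theta> K k" if k: "k \<in> K" for k
  proof -
    have "{1..6} - {k} = insert j (K - {k})" using k j by (auto simp: K_def)
    then show ?thesis unfolding omega_def node_prod_def by (simp add: K_def)
  qed
  define G where "G = lagrange_interp \<theta> K z"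
  have G_nodes: "poly G (\<theta> k) = z k" if "k \<in> K" for k
    using poly_lagrange_interp[OF fin inj that] by (simp add: G_def)
  have moment: "(\<Sum>k\<in>K. \<theta> k ^ m * poly G (\<theta> k) / node_prod \<theta> K k) = 0" if "m \<le> 2" for m
  proof -
    have "(\<Sum>k\<in>{1..6}. \<theta> k ^ m * (\<theta> k - \<theta> j) * z k / omega \<theta> k)
            = (\<Sum>k\<in>K. \<theta> k ^ m * (\<theta> k - \<theta> j) * z k / omega \<theta> k)"
      unfolding K_def using j by (intro sum.mono_neutral_right) auto
    also have "\<dots> = (\<Sum>k\<in>K. \<theta> k ^ m * poly G (\<theta> k) / node_prod \<theta> K k)"
    proof (intro sum.cong refl)
      fix k assume k: "k \<in> K"
      have "\<theta> k - \<theta> j \<noteq> 0" using k j nodes_ne by (auto simp: K_def)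
      then show "\<theta> k ^ m * (\<theta> k - \<theta> j) * z k / omega \<theta> k
                   = \<theta> k ^ m * poly G (\<theta> k) / node_prod \<theta> K k"
        by (simp add: omega_split[OF k] G_nodes[OF k])
    qed
    finally show ?thesis using cross that by simp
  qed
  have "K \<noteq> {}" using card by auto
  then have "degree G < 5"
    using degree_lagrange_interp[OF fin, of \<theta> z] card by (simp add: G_def)
  then have "degree G < 4" using lagrange_degree_drop[OF fin inj, of 0 G] card moment[of 0] by simp
  then have "degree G < 3" using lagrange_degree_drop[OF fin inj, of 1 G] card moment[of 1] by simp
  then have "degree G < 2" using lagrange_degree_drop[OF fin inj, of 2 G] card moment[of 2] by simp
  then have "poly G x = coeff G 0 + coeff G 1 * x" for x
    using poly_bounded_degree[of G 1 x] by simp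
  then show ?thesis using G_nodes unfolding K_def by metis
qed

lemma affine_up_to_sign_at_node:
  assumes j: "j \<in> {1..6}"
    and cross: "\<forall>m\<le>2. (\<Sum>k\<in>{1..6}. \<theta> k ^ m * (\<theta> k - \<theta> j) * z k / omega \<theta> k) = 0"
    and square: "(\<Sum>k\<in>{1..6}. z k ^ 2 / omega \<theta> k) = 0"
  shows "\<exists>\<alpha> \<beta>. \<forall>k\<in>{1..6}. z k = \<alpha> + \<beta> * \<theta> k \<or> (k = j \<and> z k = -(\<alpha> + \<beta> * \<theta> k))"
proof -
  obtain \<alpha> \<beta> where off: "\<forall>k\<in>{1..6}-{j}. z k = \<alpha> + \<beta> * \<theta> k"
    using affine_off_node[OF j cross] by blast
  define lin where "lin k = \<alpha> + \<beta> * \<theta> k" for k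
  have split_j: "(\<Sum>k\<in>{1..6}. f k) = f j + (\<Sum>k\<in>{1..6}-{j}. f k)" for f :: "nat \<Rightarrow> 'a"
    using j by (simp add: sum.remove)
  have "(\<Sum>k\<in>{1..6}. lin k ^ 2 / omega \<theta> k) = 0"
    using omega_sum_affine_sq[of 0 \<alpha> \<beta>] by (simp add: lin_def)
  moreover have "(\<Sum>k\<in>{1..6}-{j}. z k ^ 2 / omega \<theta> k) = (\<Sum>k\<in>{1..6}-{j}. lin k ^ 2 / omega \<theta> k)"
    using off by (simp add: lin_def)
  ultimately have "z j ^ 2 / omega \<theta> j + (\<Sum>k\<in>{1..6}-{j}. lin k ^ 2 / omega \<theta> k)
                  = lin j ^ 2 / omega \<theta> j + (\<Sum>k\<in>{1..6}-{j}. lin k ^ 2 / omega \<theta> k)"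
    using square split_j[of "\<lambda>k. z k ^ 2 / omega \<theta> k"] split_j[of "\<lambda>k. lin k ^ 2 / omega \<theta> k"]
    by simp
  then have "z j ^ 2 / omega \<theta> j = lin j ^ 2 / omega \<theta> j" by simp
  then have "z j ^ 2 = lin j ^ 2" using omega_nonzero[OF j] by simp
  then have "z j = lin j \<or> z j = - lin j" by (simp add: power2_eq_iff)
  then show ?thesis using off by (auto simp: lin_def)
qed


section \<open>Rigidity: a linear automorphism of S that is scalar on Delta_0 is scalar\<close>

lemma scalar_on_Delta0:
  fixes D :: "'a^6^6"
  assumes fixes_Delta0: "\<forall>u::'a^2. u \<noteq> 0 \<longrightarrow> (\<exists>c. c \<noteq> 0 \<and> D *v emb2 u = c *s emb2 u)"
  shows "\<exists>c. c \<noteq> 0 \<and> (\<forall>p. in_span_Delta0 p \<longrightarrow> D *v p = c *s p)"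
proof -
  define u1 :: "'a^2" where "u1 = (\<chi> i. if i = 0 then 1 else 0)"
  define uX :: "'a^2" where "uX = (\<chi> i. if i = 0 then 0 else 1)"
  have "u1 \<noteq> 0" "uX \<noteq> 0" "u1 + uX \<noteq> 0"
    by (auto simp: u1_def uX_def vec_eq_iff intro: exI[of _ 1])
  then obtain c1 c2 c3 where c1: "c1 \<noteq> 0" "D *v emb2 u1 = c1 *s emb2 u1"
    and c2: "D *v emb2 uX = c2 *s emb2 uX"
    and c3: "D *v emb2 (u1 + uX) = c3 *s emb2 (u1 + uX)"
    using fixes_Delta0 by meson
  have emb2_add: "emb2 (u1 + uX) = emb2 u1 + emb2 uX" by (simp add: emb2_def vec_eq_iff)
  have sum_image: "c3 *s (emb2 u1 + emb2 uX) = c1 *s emb2 u1 + c2 *s emb2 uX"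
    using c1 c2 c3 emb2_add by (simp add: matrix_vector_right_distrib)
  have "c3 = c1" using arg_cong[OF sum_image, of "\<lambda>v. v$0"] by (simp add: emb2_def u1_def uX_def)
  moreover have "c3 = c2" using arg_cong[OF sum_image, of "\<lambda>v. v$1"] by (simp add: emb2_def u1_def uX_def)
  have "D *v p = c1 *s p" if p_span: "in_span_Delta0 p" for p
  proof -
    obtain \<alpha> \<beta> where ab: "\<forall>k\<in>{1..6}. ev p k = \<alpha> + \<beta> * \<theta> k"
      using p_span unfolding in_span_Delta0_def by blast
    have "p = \<alpha> *s emb2 u1 + \<beta> *s emb2 uX"
      by (rule ev_inj) (simp add: ab evalP_add evalP_scale evalP_emb2 u1_def uX_def)
    then show ?thesis using c1 c2 \<open>c3 = c1\<close> \<open>c3 = c2\<close>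
      by (simp add: matrix_vector_right_distrib vec.scale algebra_simps)
  qed
  then show ?thesis using c1 by blast
qed

context
  fixes D :: "'a^6^6" and c :: 'a
  assumes two: "(2::'a) \<noteq> 0"
    and D_S: "\<forall>p. inS \<theta> p \<longrightarrow> inS \<theta> (D *v p)"
    and D_inj: "\<forall>p. D *v p = 0 \<longrightarrow> p = 0"
    and c_nz: "c \<noteq> 0"
    and D_Delta0: "\<forall>p. in_span_Delta0 p \<longrightarrow> D *v p = c *s p"
begin

(* Since D is injective and preserves span(Delta_0), it cannot map y_j into that span. *)
lemma sign_vec_image_not_in_span:
  assumes j: "j \<in> {1..6}"
  shows "\<not> in_span_Delta0 (D *v sign_vec j)"
proof
  assume "in_span_Delta0 (D *v sign_vec j)"
  then obtain \<alpha> \<beta> where ab: "\<forall>k\<in>{1..6}. ev (D *v sign_vec j) k = \<alpha> + \<beta> * \<theta> k"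
    unfolding in_span_Delta0_def by auto
  define w where "w = vec_with_values (\<lambda>k. \<alpha>/c + \<beta>/c * \<theta> k)"
  have ev_w: "ev w k = \<alpha>/c + \<beta>/c * \<theta> k" if "k \<in> {1..6}" for k
    using that by (simp add: w_def ev_vec_with_values)
  then have "in_span_Delta0 w" unfolding in_span_Delta0_def by blast
  then have "D *v w = c *s w" using D_Delta0 by blast
  moreover have "D *v sign_vec j = c *s w"
    by (rule ev_inj) (use c_nz in \<open>simp add: ab evalP_scale ev_w field_simps\<close>)
  ultimately have "D *v (sign_vec j - w) = 0" by (simp add: vec.diff)
  then have "sign_vec j = w" using D_inj by (metis eq_iff_diff_eq_0)
  then have "\<forall>k\<in>{1..6}. sign_val j k = \<alpha>/c + \<beta>/c * \<theta> k" using ev_w ev_sign_vec by metis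
  then show False using sign_not_affine[OF two j] by blast
qed

(* Testing D on y_j and on y_j + x, x the element of Delta_0 vanishing at theta_j (both on S):
   the values of D y_j are those of an affine function, twisted by the sign at j. *)
lemma sign_vec_image_signed:
  assumes j: "j \<in> {1..6}"
  shows "\<exists>\<alpha> \<beta>. \<forall>k\<in>{1..6}. ev (D *v sign_vec j) k = sign_val j k * (\<alpha> + \<beta> * \<theta> k)"
proof -
  define x where "x = vec_with_values (\<lambda>k. \<theta> k - \<theta> j)"
  have ev_x: "ev x k = \<theta> k - \<theta> j" if "k \<in> {1..6}" for k
    using that by (simp add: x_def ev_vec_with_values)
  have x_span: "in_span_Delta0 x"
    unfolding in_span_Delta0_def using ev_x by (intro exI[of _ "- \<theta> j"] exI[of _ 1]) auto
  define z where "z = D *v sign_vec j"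
  have "inS \<theta> (sign_vec j)" by (rule inS_unit_squares) (simp add: ev_sign_vec sign_sq)
  then have z_S: "inS \<theta> z" using D_S z_def by blast
  have "inS \<theta> (x + sign_vec j)"
  proof (rule inS_signed_affine[of _ j "1 - \<theta> j" 1])
    show "\<forall>k\<in>{1..6}. ev (x + sign_vec j) k = sign_val j k * (1 - \<theta> j + 1 * \<theta> k)"
      by (auto simp: evalP_add ev_x ev_sign_vec sign_val_def)
    have "ev (x + sign_vec j) j = -1" using j by (simp add: evalP_add ev_x ev_sign_vec sign_val_def)
    then show "x + sign_vec j \<noteq> 0" by (auto simp: evalP_zero)
  qed
  moreover have "D *v (x + sign_vec j) = c *s x + z"
    using D_Delta0 x_span by (simp add: z_def matrix_vector_right_distrib)
  ultimately have "inS \<theta> (c *s x + z)" using D_S by metis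
  then have "\<forall>m\<le>2. (\<Sum>k\<in>{1..6}. \<theta> k ^ m * (\<theta> k - \<theta> j) * ev z k / omega \<theta> k) = 0"
    using cross_vanishes_on_S[OF two c_nz x_span z_S] unfolding cross_def by (simp add: ev_x)
  moreover have "(\<Sum>k\<in>{1..6}. ev z k ^ 2 / omega \<theta> k) = 0"
    using z_S unfolding inS_iff_quadric quadric_def by simp
  ultimately obtain \<alpha> \<beta> where ab:
    "\<forall>k\<in>{1..6}. ev z k = \<alpha> + \<beta> * \<theta> k \<or> (k = j \<and> ev z k = -(\<alpha> + \<beta> * \<theta> k))"
    using affine_up_to_sign_at_node[OF j, of "ev z"] by blast
  have "ev z j \<noteq> \<alpha> + \<beta> * \<theta> j"
  proof
    assume "ev z j = \<alpha> + \<beta> * \<theta> j"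
    then have "in_span_Delta0 z" unfolding in_span_Delta0_def using ab by metis
    then show False using sign_vec_image_not_in_span[OF j] z_def by blast
  qed
  then have "\<forall>k\<in>{1..6}. ev z k = sign_val j k * (\<alpha> + \<beta> * \<theta> k)"
    using ab by (auto simp: sign_val_def)
  then show ?thesis using z_def by blast
qed

(* Comparing D y_i and D y_j through the point y_i + y_j - 1 of S: the affine part of
   D y_j takes the value c at every other node. *)
lemma sign_vec_image_at_other_node:
  assumes i: "i \<in> {1..6}" and j: "j \<in> {1..6}" and ij: "i \<noteq> j"
    and Dyi: "\<forall>k\<in>{1..6}. ev (D *v sign_vec i) k = sign_val i k * (\<alpha>i + \<beta>i * \<theta> k)"
    and Dyj: "\<forall>k\<in>{1..6}. ev (D *v sign_vec j) k = sign_val j k * (\<alpha>j + \<beta>j * \<theta> k)"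
  shows "\<alpha>j + \<beta>j * \<theta> i = c"
proof -
  have li_nz: "\<alpha>i + \<beta>i * \<theta> i \<noteq> 0"
  proof
    assume "\<alpha>i + \<beta>i * \<theta> i = 0"
    then have "\<forall>k\<in>{1..6}. ev (D *v sign_vec i) k = \<alpha>i + \<beta>i * \<theta> k"
      using Dyi by (auto simp: sign_val_def)
    then show False using sign_vec_image_not_in_span[OF i] unfolding in_span_Delta0_def by blast
  qed
  define y where "y = sign_vec i + sign_vec j - one_vec"
  have "inS \<theta> y"
    by (rule inS_unit_squares) (use ij in \<open>auto simp: y_def evalP_add evalP_diff ev_sign_vec
        ev_one_vec sign_val_def\<close>)
  then have Dy_S: "inS \<theta> (D *v y)" using D_S by blast
  define u where "u k = sign_val i k * (\<alpha>i + \<beta>i * \<theta> k) + sign_val j k * (\<alpha>j + \<beta>j * \<theta> k) - c" for k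
  define h where "h k = (\<alpha>i + \<alpha>j - c) + (\<beta>i + \<beta>j) * \<theta> k" for k
  have ev_Dy: "ev (D *v y) k = u k" if "k \<in> {1..6}" for k
    using that Dyi Dyj D_Delta0[rule_format, OF one_vec_in_span]
    by (simp add: y_def vec.add vec.diff evalP_add evalP_diff evalP_scale ev_one_vec u_def)
  define f where "f k = (u k ^ 2 - h k ^ 2) / omega \<theta> k" for k
  have "f i = 0"
  proof (rule two_node_moments[OF i j ij])
    show "\<forall>k\<in>{1..6}. k \<noteq> i \<longrightarrow> k \<noteq> j \<longrightarrow> f k = 0"
      by (auto simp: f_def u_def h_def sign_val_def algebra_simps)
    show "\<forall>m\<le>1. (\<Sum>k\<in>{1..6}. \<theta> k ^ m * f k) = 0"
    proof (intro allI impI)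
      fix m :: nat assume "m \<le> 1"
      then have m: "m \<le> 2" by simp
      have "(\<Sum>k\<in>{1..6}. \<theta> k ^ m * f k)
              = quadric (D *v y) m - (\<Sum>k\<in>{1..6}. \<theta> k ^ m * h k ^ 2 / omega \<theta> k)"
        unfolding quadric_def f_def
        by (simp add: ev_Dy sum_subtractf[symmetric] algebra_simps diff_divide_distrib)
      also have "\<dots> = 0"
        using inS_quadric[OF Dy_S m] omega_sum_affine_sq[OF m] by (simp add: h_def)
      finally show "(\<Sum>k\<in>{1..6}. \<theta> k ^ m * f k) = 0" .
    qed
  qed
  then have "u i ^ 2 - h i ^ 2 = 0" using omega_nonzero[OF i] by (simp add: f_def)
  moreover have "u i ^ 2 - h i ^ 2 = (2 * (\<alpha>i + \<beta>i * \<theta> i)) * (2 * (c - (\<alpha>j + \<beta>j * \<theta> i)))"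
    using ij by (simp add: u_def h_def sign_val_def power2_eq_square algebra_simps)
  ultimately have "(2 * (\<alpha>i + \<beta>i * \<theta> i)) * (2 * (c - (\<alpha>j + \<beta>j * \<theta> i))) = 0" by simp
  then have "c - (\<alpha>j + \<beta>j * \<theta> i) = 0" using two li_nz by (simp only: mult_eq_0_iff) auto
  then show ?thesis by simp
qed

lemma sign_vec_image:
  assumes j: "j \<in> {1..6}"
  shows "D *v sign_vec j = c *s sign_vec j"
proof -
  obtain \<alpha>j \<beta>j where Dyj: "\<forall>k\<in>{1..6}. ev (D *v sign_vec j) k = sign_val j k * (\<alpha>j + \<beta>j * \<theta> k)"
    using sign_vec_image_signed[OF j] by blast
  have at_other: "\<alpha>j + \<beta>j * \<theta> i = c" if i: "i \<in> {1..6}" "i \<noteq> j" for i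
  proof -
    obtain \<alpha>i \<beta>i where "\<forall>k\<in>{1..6}. ev (D *v sign_vec i) k = sign_val i k * (\<alpha>i + \<beta>i * \<theta> k)"
      using sign_vec_image_signed[OF i(1)] by blast
    then show ?thesis using sign_vec_image_at_other_node[OF i(1) j i(2) _ Dyj] by blast
  qed
  obtain a b where ab: "a \<in> {1..6}" "b \<in> {1..6}" "a \<noteq> b" "a \<noteq> j" "b \<noteq> j"
    by (rule two_other_nodes)
  have "\<beta>j = 0" "\<alpha>j = c"
    using affine_two_nodes[OF ab(1-3) at_other[OF ab(1,4)] at_other[OF ab(2,5)]] by auto
  then show ?thesis
    by (intro ev_inj) (simp add: Dyj evalP_scale ev_sign_vec mult.commute)
qed

(* Since 2 is invertible, p = sum_j P(theta_j)/2 * (1 - y_j); so D = c everywhere. *)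
lemma scalar_everywhere: "D *v p = c *s p"
proof -
  have D_one: "D *v one_vec = c *s one_vec" using D_Delta0 one_vec_in_span by blast
  define q where "q = (\<Sum>j\<in>{1..6}. (ev p j / 2) *s (one_vec - sign_vec j))"
  have delta: "(ev p j / 2) * (1 - sign_val j k) = (if j = k then ev p k else 0)" for j k
    using two by (auto simp: sign_val_def)
  have "p = q"
  proof (rule ev_inj, intro ballI)
    fix k :: nat assume k: "k \<in> {1..6}"
    have "ev q k = (\<Sum>j\<in>{1..6}. (ev p j / 2) * (1 - sign_val j k))"
      unfolding q_def evalP_sum using k
      by (intro sum.cong) (auto simp: evalP_scale evalP_diff ev_one_vec ev_sign_vec right_diff_distrib)
    also have "\<dots> = ev p k" unfolding delta using k by simp
    finally show "ev p k = ev q k" by simp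
  qed
  have "D *v q = (\<Sum>j\<in>{1..6}. (ev p j / 2) *s (c *s (one_vec - sign_vec j)))"
    unfolding q_def vec.sum vec.scale vec.diff
    by (intro sum.cong) (auto simp: D_one sign_vec_image vector_ssub_ldistrib)
  also have "\<dots> = c *s q"
    unfolding q_def by (simp add: vec_eq_iff sum_component sum_distrib_left algebra_simps)
  finally show ?thesis using \<open>p = q\<close> by simp
qed

end

theorem rigidity:
  fixes D :: "'a^6^6"
  assumes "(2::'a) \<noteq> 0"
    and "\<forall>p. inS \<theta> p \<longrightarrow> inS \<theta> (D *v p)"
    and "\<forall>p. D *v p = 0 \<longrightarrow> p = 0"
    and "\<forall>u::'a^2. u \<noteq> 0 \<longrightarrow> (\<exists>c. c \<noteq> 0 \<and> D *v emb2 u = c *s emb2 u)"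
  shows "\<exists>c. c \<noteq> 0 \<and> (\<forall>p. D *v p = c *s p)"
  using scalar_on_Delta0[OF assms(4)] scalar_everywhere[OF assms(1-3)] by blast

end


section \<open>The lift of B to an element of GL_0(S)\<close>

lemma two_eq_zero_mod2: "(2::2) = 0" by simp

lemma matrix_vector_2: "(B *v (u::'a::comm_semiring_1^2))$i = B$i$0 * u$0 + B$i$1 * u$1"
  by (simp add: matrix_vector_mult_def sum_2 two_eq_zero_mod2 add.commute)

lemma det_2x2: "det (B::'a::comm_ring_1^2^2) = B$0$0 * B$1$1 - B$0$1 * B$1$0"
  using det_2[of B] by (simp add: two_eq_zero_mod2 algebra_simps)

lemma sum_lincomb3:
  fixes a b c :: "'a::comm_ring_1"
  shows "(\<Sum>i\<in>K. (a * x i + b * y i + c * z i) * w i) =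
           a * (\<Sum>i\<in>K. x i * w i) + b * (\<Sum>i\<in>K. y i * w i) + c * (\<Sum>i\<in>K. z i * w i)"
proof -
  have "(\<Sum>i\<in>K. (a * x i + b * y i + c * z i) * w i)
          = (\<Sum>i\<in>K. a * (x i * w i) + b * (y i * w i) + c * (z i * w i))"
    by (simp add: algebra_simps)
  then show ?thesis by (simp add: sum.distrib sum_distrib_left)
qed

locale lifting = six_nodes \<theta> for \<theta> :: "nat \<Rightarrow> 'a::field" +
  fixes B :: "'a^2^2" and \<sigma> :: "nat \<Rightarrow> nat"
  assumes sigma: "\<sigma> permutes {1..6}"
    and B_inv: "invertible B"
    and B_perm: "\<forall>i\<in>{1..6}. proj_eq (B *v frakp \<theta> i) (frakp \<theta> (\<sigma> i))"
begin

abbreviation "b00 \<equiv> B$0$0"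
abbreviation "b01 \<equiv> B$0$1"
abbreviation "b10 \<equiv> B$1$0"
abbreviation "b11 \<equiv> B$1$1"

(* B acts on the node coordinate theta by the Moebius map theta |-> num / den. *)
definition detB :: 'a where "detB = b00 * b11 - b01 * b10"
definition den :: "nat \<Rightarrow> 'a" where "den i = b11 - b10 * \<theta> i"
definition num :: "nat \<Rightarrow> 'a" where "num i = b00 * \<theta> i - b01"
definition gain :: "nat \<Rightarrow> 'a" where "gain i = detB / den i"

lemma detB_nonzero: "detB \<noteq> 0"
  using B_inv by (simp add: invertible_det_nz det_2x2 detB_def)

lemma sigma_in: "i \<in> {1..6} \<Longrightarrow> \<sigma> i \<in> {1..6}"
  using permutes_in_image[OF sigma] by simp

lemma moebius_node:
  assumes i: "i \<in> {1..6}"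
  shows "den i \<noteq> 0" "\<theta> (\<sigma> i) = num i / den i"
proof -
  obtain c where c: "frakp \<theta> (\<sigma> i) = c *s (B *v frakp \<theta> i)"
    using B_perm i unfolding proj_eq_def by blast
  have e1: "1 = c * den i"
    using arg_cong[OF c, of "\<lambda>v. v$1"] by (simp add: matrix_vector_2 frakp_def den_def algebra_simps)
  have e0: "\<theta> (\<sigma> i) = c * num i"
    using arg_cong[OF c, of "\<lambda>v. v$0"] by (simp add: matrix_vector_2 frakp_def num_def algebra_simps)
  show den_nz: "den i \<noteq> 0" using e1 by auto
  from e1 have "c = 1 / den i" using den_nz by (simp add: field_simps)
  with e0 show "\<theta> (\<sigma> i) = num i / den i" by simp
qed

lemma gain_nonzero: "i \<in> {1..6} \<Longrightarrow> gain i \<noteq> 0"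
  using detB_nonzero moebius_node by (simp add: gain_def)

definition \<tau> :: "nat \<Rightarrow> nat" where "\<tau> = inv \<sigma>"

lemma tau: "k \<in> {1..6} \<Longrightarrow> \<tau> k \<in> {1..6}" "\<sigma> (\<tau> k) = k" "\<tau> (\<sigma> i) = i"
  using permutes_inverses[OF sigma] permutes_in_image[OF permutes_inv[OF sigma]]
  by (auto simp: \<tau>_def)

definition lift :: "'a^6 \<Rightarrow> 'a^6" where
  "lift p = vec_with_values (\<lambda>k. gain (\<tau> k) * ev p (\<tau> k))"

definition unlift :: "'a^6 \<Rightarrow> 'a^6" where
  "unlift p = vec_with_values (\<lambda>i. ev p (\<sigma> i) / gain i)"

lemma ev_lift: "k \<in> {1..6} \<Longrightarrow> ev (lift p) k = gain (\<tau> k) * ev p (\<tau> k)"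
  by (simp add: lift_def ev_vec_with_values)

lemma ev_lift_sigma: "i \<in> {1..6} \<Longrightarrow> ev (lift p) (\<sigma> i) = gain i * ev p i"
  using ev_lift[OF sigma_in, of i p] by (simp add: tau)

lemma ev_unlift: "i \<in> {1..6} \<Longrightarrow> ev (unlift p) i = ev p (\<sigma> i) / gain i"
  by (simp add: unlift_def ev_vec_with_values)

lemma linear_lift: "Vector_Spaces.linear (*s) (*s) lift"
proof unfold_locales
  show "lift (x + y) = lift x + lift y" for x y
    by (rule ev_inj) (simp add: ev_lift evalP_add tau distrib_left)
  show "lift (r *s x) = r *s lift x" for r x
    by (rule ev_inj) (simp add: ev_lift evalP_scale tau)
qed

lemma unlift_scale: "unlift (r *s x) = r *s unlift x"
  by (rule ev_inj) (simp add: ev_unlift evalP_scale sigma_in)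

lemma linear_unlift: "Vector_Spaces.linear (*s) (*s) unlift"
proof unfold_locales
  show "unlift (x + y) = unlift x + unlift y" for x y
    by (rule ev_inj) (simp add: ev_unlift evalP_add sigma_in add_divide_distrib)
qed (rule unlift_scale)

lemma lift_unlift: "lift (unlift p) = p"
proof (rule ev_inj, intro ballI)
  fix k :: nat assume k: "k \<in> {1..6}"
  show "ev (lift (unlift p)) k = ev p k"
    using ev_lift[OF k] ev_unlift[OF tau(1)[OF k]] tau(2)[of k] gain_nonzero[OF tau(1)[OF k]]
    by simp
qed

lemma unlift_lift: "unlift (lift p) = p"
  by (rule ev_inj) (simp add: ev_lift_sigma ev_unlift gain_nonzero)

lemma lift_zero: "lift 0 = 0"
  by (rule ev_inj) (simp add: ev_lift evalP_zero)

lemma lift_eq_zero_iff: "lift p = 0 \<longleftrightarrow> p = 0"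
proof
  have "unlift 0 = 0" by (rule ev_inj) (simp add: ev_unlift evalP_zero)
  then show "lift p = 0 \<Longrightarrow> p = 0" using unlift_lift[of p] by simp
qed (simp add: lift_zero)

definition liftM :: "'a^6^6" where "liftM = matrix lift"
definition unliftM :: "'a^6^6" where "unliftM = matrix unlift"

lemma liftM_apply: "liftM *v p = lift p"
  unfolding liftM_def by (rule matrix_works[OF linear_lift])

lemma unliftM_apply: "unliftM *v p = unlift p"
  unfolding unliftM_def by (rule matrix_works[OF linear_unlift])

lemma liftM_unliftM: "liftM ** unliftM = mat 1"
  by (simp add: matrix_eq matrix_vector_mul_assoc[symmetric] liftM_apply unliftM_apply lift_unlift)

lemma unliftM_liftM: "unliftM ** liftM = mat 1"
  by (simp add: matrix_eq matrix_vector_mul_assoc[symmetric] liftM_apply unliftM_apply unlift_lift)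

lemma liftM_invertible: "invertible liftM"
  unfolding invertible_def using liftM_unliftM unliftM_liftM by blast

(* On value vectors that are affine in the node, the lift acts on the affine coefficients
   (alpha, beta) by the matrix B. *)
lemma gain_affine:
  assumes i: "i \<in> {1..6}"
  shows "gain i * (\<alpha> + \<beta> * \<theta> i) = (b00 * \<alpha> + b01 * \<beta>) + (b10 * \<alpha> + b11 * \<beta>) * \<theta> (\<sigma> i)"
  unfolding moebius_node(2)[OF i] using moebius_node(1)[OF i]
  by (simp add: gain_def detB_def num_def den_def field_simps)

lemma lift_emb2: "lift (emb2 u) = emb2 (B *v u)"
proof (rule ev_inj, intro ballI)
  fix k :: nat assume k: "k \<in> {1..6}"
  have "ev (lift (emb2 u)) k = gain (\<tau> k) * (u$0 + u$1 * \<theta> (\<tau> k))"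
    by (simp add: ev_lift[OF k] evalP_emb2)
  also have "\<dots> = ev (emb2 (B *v u)) k"
    using gain_affine[OF tau(1)[OF k]] tau(2)[of k] by (simp add: evalP_emb2 matrix_vector_2)
  finally show "ev (lift (emb2 u)) k = ev (emb2 (B *v u)) k" .
qed

lemma liftM_restricts: "restricts_to liftM B"
  unfolding restricts_to_def proj_eq_def liftM_apply lift_emb2
  by (auto intro: exI[of _ 1])

lemma lift_in_span_iff: "in_span_Delta0 (lift p) \<longleftrightarrow> in_span_Delta0 p"
proof
  assume "in_span_Delta0 (lift p)"
  then obtain v where v: "lift p = emb2 v" unfolding in_span_Delta0_iff_emb2 by blast
  obtain Binv where "B ** Binv = mat 1" using B_inv unfolding invertible_def by blast
  then have "lift p = lift (emb2 (Binv *v v))"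
    by (simp add: v lift_emb2 matrix_vector_mul_assoc)
  then have "p = emb2 (Binv *v v)" by (metis unlift_lift)
  then show "in_span_Delta0 p" unfolding in_span_Delta0_iff_emb2 by blast
qed (auto simp: in_span_Delta0_iff_emb2 lift_emb2)

lemma liftM_Delta0: "inDelta0 (liftM *v p) \<longleftrightarrow> inDelta0 p"
  by (simp add: inDelta0_iff_span liftM_apply lift_eq_zero_iff lift_in_span_iff)

definition den_prod :: 'a where "den_prod = (\<Prod>l\<in>{1..6}. den l)"

lemma den_prod_nonzero: "den_prod \<noteq> 0"
  using moebius_node(1) by (simp add: den_prod_def)

lemma moebius_diff:
  assumes "i \<in> {1..6}" "l \<in> {1..6}"
  shows "\<theta> (\<sigma> i) - \<theta> (\<sigma> l) = detB * (\<theta> i - \<theta> l) / (den i * den l)"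
  unfolding moebius_node(2)[OF assms(1)] moebius_node(2)[OF assms(2)]
  using moebius_node(1)[OF assms(1)] moebius_node(1)[OF assms(2)]
  by (simp add: detB_def num_def den_def field_simps)

lemma omega_sigma:
  assumes i: "i \<in> {1..6}"
  shows "omega \<theta> (\<sigma> i) = detB ^ 5 * omega \<theta> i / (den i ^ 5 * (\<Prod>l\<in>{1..6}-{i}. den l))"
proof -
  have "\<sigma> ` ({1..6} - {i}) = \<sigma> ` {1..6} - \<sigma> ` {i}"
    by (rule inj_on_image_set_diff[OF permutes_inj_on[OF sigma]]) (use i in auto)
  then have image: "\<sigma> ` ({1..6} - {i}) = {1..6} - {\<sigma> i}"
    using permutes_image[OF sigma] by simp
  have "omega \<theta> (\<sigma> i) = (\<Prod>k\<in>\<sigma> ` ({1..6} - {i}). \<theta> (\<sigma> i) - \<theta> k)"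
    unfolding omega_def image ..
  also have "\<dots> = (\<Prod>l\<in>{1..6} - {i}. \<theta> (\<sigma> i) - \<theta> (\<sigma> l))"
    by (subst prod.reindex[OF permutes_inj_on[OF sigma]]) simp
  also have "\<dots> = (\<Prod>l\<in>{1..6} - {i}. detB * (\<theta> i - \<theta> l) / (den i * den l))"
    using i by (intro prod.cong) (auto simp: moebius_diff)
  also have "\<dots> = detB ^ 5 * omega \<theta> i / (den i ^ 5 * (\<Prod>l\<in>{1..6}-{i}. den l))"
    using i by (simp add: prod_dividef prod.distrib omega_def)
  finally show ?thesis .
qed

lemma lifted_term:
  assumes i: "i \<in> {1..6}"
  shows "\<theta> (\<sigma> i) ^ m * (gain i * x) ^ 2 / omega \<theta> (\<sigma> i)
           = (den_prod / detB ^ 3) * (\<theta> (\<sigma> i) ^ m * den i ^ 2 * (x ^ 2 / omega \<theta> i))"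
proof -
  define P where "P = (\<Prod>l\<in>{1..6}-{i}. den l)"
  have den_prod: "den_prod = den i * P" unfolding den_prod_def P_def using i by (simp add: prod.remove)
  then have "P \<noteq> 0" using den_prod_nonzero by auto
  then show ?thesis
    unfolding omega_sigma[OF i] den_prod gain_def P_def[symmetric]
    using moebius_node(1)[OF i] detB_nonzero omega_nonzero[OF i]
    by (simp add: field_simps power2_eq_square eval_nat_numeral)
qed

definition twisted :: "'a^6 \<Rightarrow> nat \<Rightarrow> 'a" where
  "twisted p m = (\<Sum>i\<in>{1..6}. \<theta> (\<sigma> i) ^ m * den i ^ 2 * (ev p i ^ 2 / omega \<theta> i))"

lemma quadric_lift: "quadric (lift p) m = (den_prod / detB ^ 3) * twisted p m"
proof -
  have "quadric (lift p) m
          = (\<Sum>i\<in>{1..6}. \<theta> (\<sigma> i) ^ m * ev (lift p) (\<sigma> i) ^ 2 / omega \<theta> (\<sigma> i))"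
    unfolding quadric_def by (rule sum.reindex_bij_betw[OF permutes_imp_bij[OF sigma], symmetric])
  also have "\<dots> = (\<Sum>i\<in>{1..6}. (den_prod / detB ^ 3) *
                     (\<theta> (\<sigma> i) ^ m * den i ^ 2 * (ev p i ^ 2 / omega \<theta> i)))"
    by (intro sum.cong) (auto simp: ev_lift_sigma lifted_term)
  finally show ?thesis by (simp add: twisted_def sum_distrib_left)
qed

(* The span of the twisted quadrics is the span of the quadrics: the change of basis is the
   symmetric square of B, with determinant detB^3. *)
lemma moebius_powers:
  assumes i: "i \<in> {1..6}"
  shows "\<theta> (\<sigma> i) ^ 0 * den i ^ 2 = b11^2 * \<theta> i ^ 0 + (-2*b11*b10) * \<theta> i ^ 1 + b10^2 * \<theta> i ^ 2"
    "\<theta> (\<sigma> i) ^ 1 * den i ^ 2 = (-b01*b11) * \<theta> i ^ 0 + (b00*b11 + b01*b10) * \<theta> i ^ 1 + (-b00*b10) * \<theta> i ^ 2"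
    "\<theta> (\<sigma> i) ^ 2 * den i ^ 2 = b01^2 * \<theta> i ^ 0 + (-2*b00*b01) * \<theta> i ^ 1 + b00^2 * \<theta> i ^ 2"
    "detB^2 * \<theta> i ^ 0 = b00^2 * (\<theta> (\<sigma> i) ^ 0 * den i ^ 2) + (2*b10*b00) * (\<theta> (\<sigma> i) ^ 1 * den i ^ 2) + b10^2 * (\<theta> (\<sigma> i) ^ 2 * den i ^ 2)"
    "detB^2 * \<theta> i ^ 1 = (b01*b00) * (\<theta> (\<sigma> i) ^ 0 * den i ^ 2) + (b11*b00 + b01*b10) * (\<theta> (\<sigma> i) ^ 1 * den i ^ 2) + (b11*b10) * (\<theta> (\<sigma> i) ^ 2 * den i ^ 2)"
    "detB^2 * \<theta> i ^ 2 = b01^2 * (\<theta> (\<sigma> i) ^ 0 * den i ^ 2) + (2*b11*b01) * (\<theta> (\<sigma> i) ^ 1 * den i ^ 2) + b11^2 * (\<theta> (\<sigma> i) ^ 2 * den i ^ 2)"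
proof -
  have e: "\<theta> (\<sigma> i) * den i = num i" using moebius_node[OF i] by simp
  have p1: "\<theta> (\<sigma> i) ^ 1 * den i ^ 2 = num i * den i"
    using e by (simp add: power2_eq_square mult.assoc[symmetric])
  have p2: "\<theta> (\<sigma> i) ^ 2 * den i ^ 2 = num i ^ 2"
    using e by (simp add: power_mult_distrib[symmetric])
  note defs = den_def num_def detB_def power2_eq_square algebra_simps
  show "\<theta> (\<sigma> i) ^ 0 * den i ^ 2 = b11^2 * \<theta> i ^ 0 + (-2*b11*b10) * \<theta> i ^ 1 + b10^2 * \<theta> i ^ 2"
    by (simp add: defs)
  show "\<theta> (\<sigma> i) ^ 1 * den i ^ 2 = (-b01*b11) * \<theta> i ^ 0 + (b00*b11 + b01*b10) * \<theta> i ^ 1 + (-b00*b10) * \<theta> i ^ 2"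
    unfolding p1 by (simp add: defs)
  show "\<theta> (\<sigma> i) ^ 2 * den i ^ 2 = b01^2 * \<theta> i ^ 0 + (-2*b00*b01) * \<theta> i ^ 1 + b00^2 * \<theta> i ^ 2"
    unfolding p2 by (simp add: defs)
  show "detB^2 * \<theta> i ^ 0 = b00^2 * (\<theta> (\<sigma> i) ^ 0 * den i ^ 2) + (2*b10*b00) * (\<theta> (\<sigma> i) ^ 1 * den i ^ 2) + b10^2 * (\<theta> (\<sigma> i) ^ 2 * den i ^ 2)"
    unfolding p1 p2 by (simp add: defs)
  show "detB^2 * \<theta> i ^ 1 = (b01*b00) * (\<theta> (\<sigma> i) ^ 0 * den i ^ 2) + (b11*b00 + b01*b10) * (\<theta> (\<sigma> i) ^ 1 * den i ^ 2) + (b11*b10) * (\<theta> (\<sigma> i) ^ 2 * den i ^ 2)"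
    unfolding p1 p2 by (simp add: defs)
  show "detB^2 * \<theta> i ^ 2 = b01^2 * (\<theta> (\<sigma> i) ^ 0 * den i ^ 2) + (2*b11*b01) * (\<theta> (\<sigma> i) ^ 1 * den i ^ 2) + b11^2 * (\<theta> (\<sigma> i) ^ 2 * den i ^ 2)"
    unfolding p1 p2 by (simp add: defs)
qed

lemma twisted_span_quadric:
  "twisted p 0 = b11^2 * quadric p 0 + (-2*b11*b10) * quadric p 1 + b10^2 * quadric p 2"
  "twisted p 1 = (-b01*b11) * quadric p 0 + (b00*b11 + b01*b10) * quadric p 1 + (-b00*b10) * quadric p 2"
  "twisted p 2 = b01^2 * quadric p 0 + (-2*b00*b01) * quadric p 1 + b00^2 * quadric p 2"
proof -
  have Q: "quadric p m = (\<Sum>i\<in>{1..6}. \<theta> i ^ m * (ev p i ^ 2 / omega \<theta> i))" for m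
    by (simp add: quadric_def)
  show "twisted p 0 = b11^2 * quadric p 0 + (-2*b11*b10) * quadric p 1 + b10^2 * quadric p 2"
    unfolding twisted_def Q sum_lincomb3[symmetric] by (rule sum.cong[OF refl]) (metis moebius_powers(1))
  show "twisted p 1 = (-b01*b11) * quadric p 0 + (b00*b11 + b01*b10) * quadric p 1 + (-b00*b10) * quadric p 2"
    unfolding twisted_def Q sum_lincomb3[symmetric] by (rule sum.cong[OF refl]) (metis moebius_powers(2))
  show "twisted p 2 = b01^2 * quadric p 0 + (-2*b00*b01) * quadric p 1 + b00^2 * quadric p 2"
    unfolding twisted_def Q sum_lincomb3[symmetric] by (rule sum.cong[OF refl]) (metis moebius_powers(3))
qed

lemma quadric_span_twisted:
  "detB^2 * quadric p 0 = b00^2 * twisted p 0 + (2*b10*b00) * twisted p 1 + b10^2 * twisted p 2"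
  "detB^2 * quadric p 1 = (b01*b00) * twisted p 0 + (b11*b00 + b01*b10) * twisted p 1 + (b11*b10) * twisted p 2"
  "detB^2 * quadric p 2 = b01^2 * twisted p 0 + (2*b11*b01) * twisted p 1 + b11^2 * twisted p 2"
proof -
  have Q: "detB^2 * quadric p m = (\<Sum>i\<in>{1..6}. (detB^2 * \<theta> i ^ m) * (ev p i ^ 2 / omega \<theta> i))" for m
    by (simp add: quadric_def sum_distrib_left mult.assoc)
  have T: "twisted p m = (\<Sum>i\<in>{1..6}. (\<theta> (\<sigma> i) ^ m * den i ^ 2) * (ev p i ^ 2 / omega \<theta> i))" for m
    by (simp add: twisted_def)
  show "detB^2 * quadric p 0 = b00^2 * twisted p 0 + (2*b10*b00) * twisted p 1 + b10^2 * twisted p 2"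
    unfolding Q T sum_lincomb3[symmetric] by (rule sum.cong[OF refl]) (metis moebius_powers(4))
  show "detB^2 * quadric p 1 = (b01*b00) * twisted p 0 + (b11*b00 + b01*b10) * twisted p 1 + (b11*b10) * twisted p 2"
    unfolding Q T sum_lincomb3[symmetric] by (rule sum.cong[OF refl]) (metis moebius_powers(5))
  show "detB^2 * quadric p 2 = b01^2 * twisted p 0 + (2*b11*b01) * twisted p 1 + b11^2 * twisted p 2"
    unfolding Q T sum_lincomb3[symmetric] by (rule sum.cong[OF refl]) (metis moebius_powers(6))
qed

lemma liftM_S: "inS \<theta> (liftM *v p) \<longleftrightarrow> inS \<theta> p"
proof -
  have scale_nz: "den_prod / detB ^ 3 \<noteq> 0" using den_prod_nonzero detB_nonzero by simp
  have "(twisted p 0 = 0 \<and> twisted p 1 = 0 \<and> twisted p 2 = 0)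
          \<longleftrightarrow> (quadric p 0 = 0 \<and> quadric p 1 = 0 \<and> quadric p 2 = 0)"
  proof
    assume "twisted p 0 = 0 \<and> twisted p 1 = 0 \<and> twisted p 2 = 0"
    then have "detB^2 * quadric p 0 = 0" "detB^2 * quadric p 1 = 0" "detB^2 * quadric p 2 = 0"
      using quadric_span_twisted[of p] by simp_all
    then show "quadric p 0 = 0 \<and> quadric p 1 = 0 \<and> quadric p 2 = 0" using detB_nonzero by simp
  next
    assume "quadric p 0 = 0 \<and> quadric p 1 = 0 \<and> quadric p 2 = 0"
    then show "twisted p 0 = 0 \<and> twisted p 1 = 0 \<and> twisted p 2 = 0"
      using twisted_span_quadric[of p] by simp
  qed
  then show ?thesis
    unfolding inS_iff_quadric liftM_apply quadric_lift using scale_nz lift_eq_zero_iff by simp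
qed

lemma liftM_GL0: "in_GL0_S \<theta> liftM"
  unfolding in_GL0_S_def in_GL_S_def using liftM_invertible liftM_S liftM_Delta0 by blast

section \<open>Uniqueness of the lift\<close>

(* Any other element of GL_0(S) restricting to B differs from the lift by a scalar: apply the
   rigidity theorem to D = A^-1 A'. *)
lemma lift_unique:
  assumes two: "(2::'a) \<noteq> 0"
    and A'_GL0: "in_GL0_S \<theta> A'" and A'_B: "restricts_to A' B"
  shows "\<exists>c. c \<noteq> 0 \<and> (\<forall>p. A' *v p = c *s (liftM *v p))"
proof -
  define D where "D = unliftM ** A'"
  have lift_D: "liftM *v (D *v x) = A' *v x" for x
    unfolding D_def by (simp add: matrix_vector_mul_assoc matrix_mul_assoc liftM_unliftM)
  have D_S: "\<forall>x. inS \<theta> x \<longrightarrow> inS \<theta> (D *v x)"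
  proof (intro allI impI)
    fix x assume "inS \<theta> x"
    then have "inS \<theta> (A' *v x)" using A'_GL0 by (simp add: in_GL0_S_def in_GL_S_def)
    then show "inS \<theta> (D *v x)" using liftM_S[of "D *v x"] by (simp add: lift_D)
  qed
  have D_inj: "\<forall>x. D *v x = 0 \<longrightarrow> x = 0"
  proof (intro allI impI)
    fix x assume "D *v x = 0"
    then have "A' *v x = 0" using lift_D[of x] by simp
    moreover obtain A'' where A'': "A'' ** A' = mat 1"
      using A'_GL0 by (auto simp: in_GL0_S_def in_GL_S_def invertible_def)
    ultimately have "A'' *v (A' *v x) = 0" by simp
    then show "x = 0" by (simp add: matrix_vector_mul_assoc A'')
  qed
  have D_Delta0: "\<forall>u::'a^2. u \<noteq> 0 \<longrightarrow> (\<exists>c. c \<noteq> 0 \<and> D *v emb2 u = c *s emb2 u)"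
  proof (intro allI impI)
    fix u :: "'a^2" assume "u \<noteq> 0"
    then obtain c where c: "c \<noteq> 0" "emb2 (B *v u) = c *s (A' *v emb2 u)"
      using A'_B unfolding restricts_to_def proj_eq_def by blast
    have "(1 / c) *s lift (emb2 u) = A' *v emb2 u"
      using c by (simp add: lift_emb2 vector_smult_assoc)
    then have "D *v emb2 u = unlift ((1 / c) *s lift (emb2 u))"
      by (simp add: D_def matrix_vector_mul_assoc[symmetric] unliftM_apply)
    also have "\<dots> = (1 / c) *s emb2 u" by (simp add: unlift_scale unlift_lift)
    finally show "\<exists>c. c \<noteq> 0 \<and> D *v emb2 u = c *s emb2 u"
      using c(1) by (intro exI[of _ "1 / c"]) simp
  qed
  obtain c where c: "c \<noteq> 0" "\<forall>x. D *v x = c *s x"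
    using rigidity[OF two D_S D_inj D_Delta0] by blast
  have "A' *v p = c *s (liftM *v p)" for p
    using lift_D[of p] c(2) by (simp add: vec.scale)
  then show ?thesis using c(1) by blast
qed

end

theorem mainTheorem12:
  fixes F :: "'a::field poly" and \<theta> :: "nat \<Rightarrow> 'a" and \<sigma> :: "nat \<Rightarrow> nat"
    and B :: "'a ^ 2 ^ 2"
  assumes alg_closed: "alg_closed_field TYPE('a)"
    and char_ne_2: "(2::'a) \<noteq> 0"
    and degF: "degree F = 6"
    and distinct_roots: "inj_on \<theta> {1..6}"
    and roots: "\<forall>i\<in>{1..6}. poly F (\<theta> i) = 0"
    and sigma: "\<sigma> permutes {1..6}"
    and B_inv: "invertible B"
    and B_perm: "\<forall>i\<in>{1..6}. proj_eq (B *v frakp \<theta> i) (frakp \<theta> (\<sigma> i))"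
  shows "\<exists>A. in_GL0_S \<theta> A \<and> restricts_to A B \<and>
           (\<forall>A'. in_GL0_S \<theta> A' \<and> restricts_to A' B \<longrightarrow>
                  (\<forall>p. inS \<theta> p \<longrightarrow> proj_eq (A *v p) (A' *v p)))"
proof -
  interpret lifting \<theta> B \<sigma>
    by unfold_locales (use distinct_roots sigma B_inv B_perm in auto)
  have "proj_eq (liftM *v p) (A' *v p)"
    if "in_GL0_S \<theta> A'" "restricts_to A' B" for A' p
    using lift_unique[OF char_ne_2 that] unfolding proj_eq_def by blast
  then show ?thesis using liftM_GL0 liftM_restricts by blast
qed

end
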